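(* Let $n\ge3$ be odd, $d,R\in\mathbb{Q}$, $d\ne0$, $R$ not a square, $D=d^2-R$, $K_0=\mathbb{Q}(\sqrt R)$, and $P=Z^n-D^{(n-1)/2}(d+\sqrt R)\in K_0[Z]$. Then $f_n=f_n(Z,d,R)$ is irreducible in $\mathbb{Q}[Z]$ if and only if $P$ is irreducible in $K_0[Z]$.
   Context: $f_n(Z,d,R)=\sum_{j=0}^{(n-1)/2}(-1)^j\frac{n}{n-j}\binom{n-j}{j}D^jZ^{n-2j}-2dD^{(n-1)/2}$, which equals $\sqrt D^{\,n}F_n(Z/\sqrt D)-2dD^{(n-1)/2}$ where $F_n(Z)=2T_n(Z/2)$ and $T_n$ is the Chebyshev polynomial of the first kind. (If $x$ is a zero of $P$, then $x+D/x$ is a zero of $f_n$.) *)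

theory Defs
  imports Complex_Main "HOL-Computational_Algebra.Polynomial" "HOL-Computational_Algebra.Polynomial_Factorial"
begin

definition fpoly :: "nat \<Rightarrow> rat \<Rightarrow> rat \<Rightarrow> rat poly" where
  "fpoly n d R = (let D = d^2 - R in
     (\<Sum>j = 0..(n - 1) div 2.
        monom ((-1)^j * (of_nat n / of_nat (n - j)) * of_nat ((n - j) choose j) * D^j) (n - 2*j))
     - [: 2 * d * D^((n - 1) div 2) :])"

definition K0 :: "rat \<Rightarrow> complex set" where
  "K0 R = {of_rat a + of_rat b * csqrt (of_rat R) | a b. True}"

definition irreducible_over :: "complex set \<Rightarrow> complex poly \<Rightarrow> bool" where
  "irreducible_over K p \<longleftrightarrow>
     (\<forall>i. coeff p i \<in> K) \<and> degree p > 0 \<and>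
     (\<forall>q r. (\<forall>i. coeff q i \<in> K) \<longrightarrow> (\<forall>i. coeff r i \<in> K) \<longrightarrow> p = q * r \<longrightarrow>
        degree q = 0 \<or> degree r = 0)"

definition Ppoly :: "nat \<Rightarrow> rat \<Rightarrow> rat \<Rightarrow> complex poly" where
  "Ppoly n d R = monom 1 n
     - [: of_rat ((d^2 - R)^((n - 1) div 2)) * (of_rat d + csqrt (of_rat R)) :]"

end

theory Submission
  imports Defs "HOL-Computational_Algebra.Fundamental_Theorem_Algebra"
begin

(* Let x be a root of P, so x^n = D^m (d + \<surd>R) with m = (n - 1)/2, and let y = x + D/x. Then
   (D/x)^n = D^m (d - \<surd>R), and the Dickson identity f(x + D/x) = x^n + (D/x)^n - 2 d D^m gives
   f(y) = 0. Writing deg_K z \<ge> k for "no nonzero polynomial over K of degree < k vanishes at z", the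
   theorem is the chain
     f irreducible over \<rat>  \<longleftrightarrow>  deg_\<rat> y \<ge> n  \<longleftrightarrow>  deg_K0 y \<ge> n  \<longleftrightarrow>  deg_K0 x \<ge> n  \<longleftrightarrow>  P irreducible over K0.
   The second step holds because n is odd: an irreducible factor g of f over K0 either has rational
   coordinates vanishing at y, or g times its conjugate is a rational factor of f of even degree.
   For the third step, x is a root of the quadratic Z^2 - y Z + D over K0(y), whose norm turns a
   polynomial over K0 vanishing at x into one of no larger degree vanishing at y; conversely a
   polynomial q over K0 vanishing at y gives Z^(deg q) q(Z + D/Z), which vanishes at x and at D/x,
   while P(D/x) \<noteq> 0. *)

section \<open>Polynomials over a subfield\<close>

definition poly_over :: "'a::zero set \<Rightarrow> 'a poly \<Rightarrow> bool" where
  "poly_over K p \<longleftrightarrow> (\<forall>i. coeff p i \<in> K)"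

definition min_poly_degree_ge :: "'a::comm_semiring_0 set \<Rightarrow> 'a \<Rightarrow> nat \<Rightarrow> bool" where
  "min_poly_degree_ge K x k \<longleftrightarrow> (\<forall>p. poly_over K p \<longrightarrow> p \<noteq> 0 \<longrightarrow> poly p x = 0 \<longrightarrow> k \<le> degree p)"

locale subfield =
  fixes K :: "'a::field_char_0 set"
  assumes zero_mem [simp]: "0 \<in> K" and one_mem [simp]: "1 \<in> K"
    and add_mem [intro]: "a \<in> K \<Longrightarrow> b \<in> K \<Longrightarrow> a + b \<in> K"
    and mult_mem [intro]: "a \<in> K \<Longrightarrow> b \<in> K \<Longrightarrow> a * b \<in> K"
    and uminus_mem [intro]: "a \<in> K \<Longrightarrow> - a \<in> K"
    and inverse_mem [intro]: "a \<in> K \<Longrightarrow> inverse a \<in> K"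
begin

lemma diff_mem [intro]: "a \<in> K \<Longrightarrow> b \<in> K \<Longrightarrow> a - b \<in> K"
  unfolding diff_conv_add_uminus by blast

lemma divide_mem [intro]: "a \<in> K \<Longrightarrow> b \<in> K \<Longrightarrow> a / b \<in> K"
  unfolding divide_inverse by blast

lemma power_mem [intro]: "a \<in> K \<Longrightarrow> a ^ k \<in> K"
  by (induction k) auto

lemma sum_mem [intro]: "(\<And>i. i \<in> A \<Longrightarrow> f i \<in> K) \<Longrightarrow> sum f A \<in> K"
  by (induction A rule: infinite_finite_induct) auto

lemma of_nat_mem [simp]: "of_nat k \<in> K"
  by (induction k) auto

lemma of_int_mem [simp]: "of_int k \<in> K"
  by (cases k rule: int_cases) (auto simp del: of_nat_Suc)

lemma of_rat_mem [simp]: "of_rat r \<in> K"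
  by (cases r) (auto simp: of_rat_rat)

lemma poly_over_0 [simp]: "poly_over K 0"
  and poly_over_1 [simp]: "poly_over K 1"
  by (simp_all add: poly_over_def coeff_1)

lemma poly_over_pCons [intro]: "c \<in> K \<Longrightarrow> poly_over K p \<Longrightarrow> poly_over K (pCons c p)"
  by (auto simp: poly_over_def coeff_pCons split: nat.split)

lemma poly_over_add [intro]: "poly_over K p \<Longrightarrow> poly_over K q \<Longrightarrow> poly_over K (p + q)"
  and poly_over_uminus [intro]: "poly_over K p \<Longrightarrow> poly_over K (- p)"
  and poly_over_diff [intro]: "poly_over K p \<Longrightarrow> poly_over K q \<Longrightarrow> poly_over K (p - q)"
  and poly_over_smult [intro]: "c \<in> K \<Longrightarrow> poly_over K p \<Longrightarrow> poly_over K (smult c p)"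
  and poly_over_monom [intro]: "c \<in> K \<Longrightarrow> poly_over K (monom c k)"
  by (auto simp: poly_over_def coeff_monom)

lemma poly_over_mult [intro]: "poly_over K p \<Longrightarrow> poly_over K q \<Longrightarrow> poly_over K (p * q)"
  unfolding poly_over_def coeff_mult by blast

lemma poly_over_power [intro]: "poly_over K p \<Longrightarrow> poly_over K (p ^ k)"
  by (induction k) auto

lemma poly_over_sum [intro]: "(\<And>i. i \<in> A \<Longrightarrow> poly_over K (f i)) \<Longrightarrow> poly_over K (sum f A)"
  unfolding poly_over_def coeff_sum by blast

lemma division_over:
  assumes "poly_over K p" "poly_over K q" "q \<noteq> 0"
  obtains s r where "poly_over K s" "poly_over K r" "p = s * q + r" "r = 0 \<or> degree r < degree q"
  using assms(1)
proof (induction "degree p" arbitrary: p thesis rule: less_induct)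
  case less
  show ?case
  proof (cases "p = 0 \<or> degree p < degree q")
    case True
    then show ?thesis by (intro less.prems(1)[of 0 p]) (auto simp: less.prems(2))
  next
    case False
    define t where "t = monom (lead_coeff p / lead_coeff q) (degree p - degree q)"
    have t: "poly_over K t"
      using less.prems(2) assms(2) by (auto simp: t_def poly_over_def)
    have "p - t * q = 0 \<or> degree (p - t * q) < degree p"
    proof -
      have "lead_coeff (t * q) = lead_coeff p"
        using False assms(3) unfolding lead_coeff_mult by (simp add: t_def degree_monom_eq)
      moreover have "degree (t * q) = degree p"
        using False assms(3) by (simp add: t_def degree_mult_eq degree_monom_eq)
      ultimately have "coeff (p - t * q) (degree p) = 0" "degree (p - t * q) \<le> degree p"
        by (simp_all add: degree_diff_le)
      then show ?thesis
        by (metis le_neq_implies_less leading_coeff_0_iff)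
    qed
    then show ?thesis
    proof
      assume "p - t * q = 0"
      then show ?thesis using t by (intro less.prems(1)[of t 0]) auto
    next
      assume "degree (p - t * q) < degree p"
      then obtain s r where "poly_over K s" "poly_over K r" "p - t * q = s * q + r"
          "r = 0 \<or> degree r < degree q"
        using less.hyps[of "p - t * q"] less.prems(2) t assms(2) by blast
      then show ?thesis using t
        by (intro less.prems(1)[of "t + s" r]) (auto simp: algebra_simps)
    qed
  qed
qed

lemma poly_over_div_mod:
  assumes "poly_over K p" "poly_over K q"
  shows "poly_over K (p div q)" "poly_over K (p mod q)"
proof -
  have "poly_over K (p div q) \<and> poly_over K (p mod q)"
  proof (cases "q = 0")
    case False
    then obtain s r where sr: "poly_over K s" "poly_over K r" "p = s * q + r"
        "r = 0 \<or> degree r < degree q"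
      using division_over assms by blast
    have "(p div q, p mod q) = (s, r)"
    proof (rule euclidean_relation_polyI)
      assume "q dvd p"
      then have "q dvd r" using sr(3) by (simp add: dvd_add_right_iff)
      then show "r = 0 \<and> p = s * q" using sr(3,4) by (auto dest: dvd_imp_degree_le)
    qed (use sr False in auto)
    then show ?thesis using sr by simp
  qed (use assms in simp)
  then show "poly_over K (p div q)" "poly_over K (p mod q)" by blast+
qed

lemma min_poly_exists:
  assumes "poly_over K p" "p \<noteq> 0" "poly p x = 0"
  obtains m where "poly_over K m" "m \<noteq> 0" "poly m x = 0" "min_poly_degree_ge K x (degree m)"
proof -
  define ann where "ann k \<longleftrightarrow> (\<exists>m. poly_over K m \<and> m \<noteq> 0 \<and> poly m x = 0 \<and> degree m = k)" for k
  have "ann (degree p)" using assms unfolding ann_def by blast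
  then obtain m where m: "poly_over K m" "m \<noteq> 0" "poly m x = 0" "degree m = (LEAST k. ann k)"
    using LeastI[of ann] unfolding ann_def by blast
  have "min_poly_degree_ge K x (degree m)"
    unfolding min_poly_degree_ge_def m(4) by (blast intro: Least_le[of ann] ann_def[THEN iffD2])
  with m that show ?thesis by blast
qed

lemma min_poly_dvd:
  assumes m: "poly_over K m" "m \<noteq> 0" "poly m x = 0" "min_poly_degree_ge K x (degree m)"
    and p: "poly_over K p" "poly p x = 0"
  shows "m dvd p"
proof -
  have "poly (p mod m) x = 0"
    using m(3) p(2) div_mult_mod_eq[of p m] by (metis add_0 mult_zero_right poly_add poly_mult)
  moreover have "poly_over K (p mod m)" using poly_over_div_mod m(1) p(1) by blast
  ultimately have "p mod m = 0"
    using m(2,4) degree_mod_less' unfolding min_poly_degree_ge_def by (meson leD)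
  then show ?thesis by (rule mod_0_imp_dvd)
qed

end

lemma irreducible_over_iff:
  "irreducible_over K p \<longleftrightarrow> poly_over K p \<and> 0 < degree p \<and>
     (\<forall>q r. poly_over K q \<longrightarrow> poly_over K r \<longrightarrow> p = q * r \<longrightarrow> degree q = 0 \<or> degree r = 0)"
  unfolding irreducible_over_def poly_over_def ..

lemma irreducible_overD:
  assumes "irreducible_over K p" "poly_over K q" "poly_over K r" "p = q * r"
  shows "degree q = 0 \<or> degree r = 0"
  using assms(1) unfolding irreducible_over_iff
  by (elim conjE allE[of _ q] allE[of _ r] impE) (use assms(2-4) in auto)

lemma irreducible_over_subset:
  assumes "irreducible_over K p" "L \<subseteq> K" "poly_over L p"
  shows "irreducible_over L p"
  unfolding irreducible_over_iff
proof (intro conjI allI impI)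
  show "poly_over L p" "0 < degree p" using assms by (simp_all add: irreducible_over_iff)
  fix q r assume "poly_over L q" "poly_over L r" "p = q * r"
  with assms(2) show "degree q = 0 \<or> degree r = 0"
    by (intro irreducible_overD[OF assms(1)]) (auto simp: poly_over_def)
qed

lemma irreducible_over_iff_min_poly_degree_ge:
  assumes "subfield K" and p: "poly_over K p" "0 < degree p" "poly p x = 0"
  shows "irreducible_over K p \<longleftrightarrow> min_poly_degree_ge K x (degree p)"
proof
  interpret subfield K by fact
  assume irr: "irreducible_over K p"
  show "min_poly_degree_ge K x (degree p)"
    unfolding min_poly_degree_ge_def
  proof (intro allI impI, rule ccontr)
    fix q assume q: "poly_over K q" "q \<noteq> 0" "poly q x = 0" and "\<not> degree p \<le> degree q"
    obtain m where m: "poly_over K m" "m \<noteq> 0" "poly m x = 0" "min_poly_degree_ge K x (degree m)"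
      using min_poly_exists q(1-3) by blast
    have "degree m \<le> degree q"
      using m(4) q(1-3) unfolding min_poly_degree_ge_def by blast
    with \<open>\<not> degree p \<le> degree q\<close> have "degree m < degree p" by simp
    obtain k where p_eq: "p = m * k" using min_poly_dvd[OF m p(1,3)] by (rule dvdE)
    have "poly_over K k"
      using poly_over_div_mod(1)[OF p(1) m(1)] p_eq m(2) by simp
    then have "degree m = 0 \<or> degree k = 0"
      by (rule irreducible_overD[OF irr m(1) _ p_eq])
    moreover have "degree m \<noteq> 0"
      using m(2,3) by (metis degree_eq_zeroE poly_const_conv pCons_0_0)
    moreover have "degree p = degree m + degree k"
      using p_eq p(2) m(2) by (cases "k = 0") (auto simp: degree_mult_eq)
    ultimately show False using \<open>degree m < degree p\<close> by linarith
  qed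
next
  assume min: "min_poly_degree_ge K x (degree p)"
  show "irreducible_over K p"
    unfolding irreducible_over_iff
  proof (intro conjI allI impI p(1,2))
    fix q r assume qr: "poly_over K q" "poly_over K r" "p = q * r"
    then have "q \<noteq> 0" "r \<noteq> 0" using p(2) by auto
    then have deg: "degree p = degree q + degree r" using qr(3) by (simp add: degree_mult_eq)
    have "poly q x = 0 \<or> poly r x = 0" using qr(3) p(3) by simp
    then have "degree p \<le> degree q \<or> degree p \<le> degree r"
      using min qr(1,2) \<open>q \<noteq> 0\<close> \<open>r \<noteq> 0\<close> unfolding min_poly_degree_ge_def by blast
    then show "degree q = 0 \<or> degree r = 0" using deg by linarith
  qed
qed

lemma root_exists_if_degree_pos:
  fixes p :: "complex poly"
  assumes "0 < degree p"
  obtains z where "poly p z = 0"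
proof -
  have "\<not> constant (poly p)" using assms by (simp add: constant_degree)
  then show ?thesis using fundamental_theorem_of_algebra that by blast
qed

section \<open>Rational polynomials\<close>

abbreviation of_rat_poly :: "rat poly \<Rightarrow> 'a::field_char_0 poly" where
  "of_rat_poly \<equiv> map_poly of_rat"

lemma coeff_of_rat_poly [simp]: "coeff (of_rat_poly p) i = of_rat (coeff p i)"
  by (simp add: coeff_map_poly)

lemma degree_of_rat_poly [simp]: "degree (of_rat_poly p) = degree p"
  by (simp add: degree_map_poly)

lemma of_rat_poly_eq_iff [simp]: "of_rat_poly p = of_rat_poly q \<longleftrightarrow> p = q"
  by (auto simp: poly_eq_iff)

lemma of_rat_poly_eq_0_iff [simp]: "of_rat_poly p = 0 \<longleftrightarrow> p = 0"
  using of_rat_poly_eq_iff[of p 0] by simp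

lemma of_rat_poly_add: "of_rat_poly (p + q) = of_rat_poly p + of_rat_poly q"
  and of_rat_poly_diff: "of_rat_poly (p - q) = of_rat_poly p - of_rat_poly q"
  and of_rat_poly_uminus: "of_rat_poly (- p) = - of_rat_poly p"
  and of_rat_poly_smult: "of_rat_poly (smult c p) = smult (of_rat c) (of_rat_poly p)"
  and of_rat_poly_mult: "of_rat_poly (p * q) = of_rat_poly p * of_rat_poly q"
  by (auto intro!: poly_eqI simp: of_rat_add of_rat_diff of_rat_minus of_rat_mult coeff_mult
      of_rat_sum)

lemma of_rat_poly_sum: "of_rat_poly (sum f A) = (\<Sum>i\<in>A. of_rat_poly (f i))"
  by (intro poly_eqI) (simp add: coeff_sum of_rat_sum)

lemma (in subfield) poly_over_of_rat_poly [intro]: "poly_over K (of_rat_poly p)"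
  by (simp add: poly_over_def)

lemma subfield_Rats: "subfield \<rat>"
  by unfold_locales auto

lemma poly_over_Rats_iff: "poly_over \<rat> p \<longleftrightarrow> (\<exists>q. p = of_rat_poly q)"
  by (metis poly_over_def ratpolyE subfield.poly_over_of_rat_poly subfield_Rats)

lemma irreducible_iff_irreducible_over_Rats:
  "irreducible f \<longleftrightarrow> irreducible_over \<rat> (of_rat_poly f :: complex poly)"
proof
  assume irr: "irreducible f"
  then have "f \<noteq> 0" by auto
  with irr have deg: "degree f \<noteq> 0"
    using irreducible_not_unit is_unit_iff_degree by metis
  show "irreducible_over \<rat> (of_rat_poly f)"
    unfolding irreducible_over_iff
  proof (intro conjI allI impI)
    show "poly_over \<rat> (of_rat_poly f)" by (rule subfield.poly_over_of_rat_poly[OF subfield_Rats])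
    show "0 < degree (of_rat_poly f :: complex poly)" using deg by simp
    fix q r :: "complex poly" assume "poly_over \<rat> q" "poly_over \<rat> r" "of_rat_poly f = q * r"
    then obtain q' r' where qr: "q = of_rat_poly q'" "r = of_rat_poly r'" and "f = q' * r'"
      by (auto simp: poly_over_Rats_iff of_rat_poly_mult[symmetric])
    then have "is_unit q' \<or> is_unit r'" "q' \<noteq> 0" "r' \<noteq> 0"
      using irr \<open>f \<noteq> 0\<close> by (auto dest: irreducibleD)
    then show "degree q = 0 \<or> degree r = 0"
      unfolding qr by (simp add: is_unit_iff_degree)
  qed
next
  assume irr: "irreducible_over \<rat> (of_rat_poly f :: complex poly)"
  then have deg: "degree f \<noteq> 0" by (simp add: irreducible_over_iff)
  then have "f \<noteq> 0" by auto
  show "irreducible f"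
  proof (rule irreducibleI)
    show "\<not> is_unit f" using deg \<open>f \<noteq> 0\<close> by (simp add: is_unit_iff_degree)
    fix a b assume ab: "f = a * b"
    then have "of_rat_poly f = (of_rat_poly a * of_rat_poly b :: complex poly)"
      by (simp add: of_rat_poly_mult)
    then have "degree (of_rat_poly a :: complex poly) = 0 \<or> degree (of_rat_poly b :: complex poly) = 0"
      by (intro irreducible_overD[OF irr] subfield.poly_over_of_rat_poly[OF subfield_Rats])
    then have "degree a = 0 \<or> degree b = 0" by simp
    moreover have "a \<noteq> 0" "b \<noteq> 0" using ab \<open>f \<noteq> 0\<close> by auto
    ultimately show "is_unit a \<or> is_unit b" by (simp add: is_unit_iff_degree)
  qed (rule \<open>f \<noteq> 0\<close>)
qed

section \<open>Dickson polynomials\<close>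

definition dickson_coeff :: "nat \<Rightarrow> nat \<Rightarrow> 'a::field_char_0" where
  "dickson_coeff M j = of_nat M / of_nat (M - j) * of_nat ((M - j) choose j)"

lemma dickson_coeff_eq_0: "M < 2 * j \<Longrightarrow> dickson_coeff M j = 0"
  by (simp add: dickson_coeff_def binomial_eq_0)

lemma dickson_coeff_0: "M \<noteq> 0 \<Longrightarrow> dickson_coeff M 0 = 1"
  by (simp add: dickson_coeff_def)

lemma dickson_coeff_rec:
  assumes "j \<le> k" "1 \<le> k"
  shows "dickson_coeff (k + 2) (Suc j) = dickson_coeff (k + 1) (Suc j) + (dickson_coeff k j :: 'a::field_char_0)"
proof (cases "j = k")
  case True
  with assms(2) show ?thesis by (simp add: dickson_coeff_eq_0)
next
  case False
  with assms(1) have "j < k" by simp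
  define p where "p = k - j"
  have k: "k = p + j" and "p \<noteq> 0" using \<open>j < k\<close> by (auto simp: p_def)
  define A :: 'a where "A = of_nat (p choose j)"
  define B :: 'a where "B = of_nat (p choose Suc j)"
  have "of_nat (Suc j) * B = (of_nat p - of_nat j) * A"
  proof -
    have "Suc p * (p choose j) = ((p choose j) + (p choose Suc j)) * Suc j"
      using Suc_times_binomial_eq[of p j] by simp
    then have "(of_nat (Suc p) * A :: 'a) = (A + B) * of_nat (Suc j)"
      unfolding A_def B_def by (metis of_nat_add of_nat_mult)
    then show ?thesis by (simp add: algebra_simps)
  qed
  moreover have "(of_nat p :: 'a) \<noteq> 0" using \<open>p \<noteq> 0\<close> by simp
  moreover have "(of_nat p + 1 :: 'a) \<noteq> 0" using of_nat_neq_0[of p, where 'a='a] by (simp add: add.commute)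
  moreover have "k + 2 - Suc j = Suc p" "k + 1 - Suc j = p" "k - j = p" using k by auto
  ultimately show ?thesis
    unfolding dickson_coeff_def k
    by (simp add: field_simps flip: A_def B_def) (metis distrib_right mult.assoc)
qed

definition dickson :: "nat \<Rightarrow> 'a::field_char_0 \<Rightarrow> 'a \<Rightarrow> 'a" where
  "dickson M a u = (\<Sum>j\<le>M. (-1)^j * dickson_coeff M j * a^j * u^(M - 2*j))"

lemma dickson_altdef:
  "dickson M a u = (\<Sum>j\<le>M div 2. (-1)^j * dickson_coeff M j * a^j * u^(M - 2*j))"
  unfolding dickson_def by (rule sum.mono_neutral_right) (auto simp: dickson_coeff_eq_0)

lemma dickson_rec:
  assumes "1 \<le> k"
  shows "dickson (k + 2) a u = u * dickson (k + 1) a u - a * dickson k a u"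
proof -
  define t where "t M j = (-1)^j * dickson_coeff M j * a^j * u^(M - 2*j)" for M j
  have t_rec: "t (k + 2) (Suc j) = u * t (k + 1) (Suc j) - a * t k j" if "j \<le> k" for j
  proof -
    have "dickson_coeff (k + 1) (Suc j) * u^(k + 2 - 2 * Suc j)
        = dickson_coeff (k + 1) (Suc j) * (u * u^(k + 1 - 2 * Suc j))"
      by (cases "2 * Suc j \<le> k + 1") (simp_all add: dickson_coeff_eq_0 Suc_diff_Suc flip: power_Suc)
    moreover have "k - 2 * j = k + 2 - 2 * Suc j" by simp
    ultimately show ?thesis
      unfolding t_def dickson_coeff_rec[OF that assms] by (simp add: algebra_simps)
  qed
  have "dickson (k + 2) a u = (\<Sum>j\<le>Suc k. t (k + 2) j)"
    by (simp add: dickson_def t_def dickson_coeff_eq_0)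
  also have "\<dots> = t (k + 2) 0 + (\<Sum>j\<le>k. t (k + 2) (Suc j))"
    by (rule sum.atMost_Suc_shift)
  also have "(\<Sum>j\<le>k. t (k + 2) (Suc j)) = (\<Sum>j\<le>k. u * t (k + 1) (Suc j) - a * t k j)"
    by (rule sum.cong[OF refl], rule t_rec) simp
  also have "\<dots> = u * (\<Sum>j\<le>k. t (k + 1) (Suc j)) - a * dickson k a u"
    by (simp add: dickson_def t_def sum_subtractf sum_distrib_left)
  moreover have "dickson (k + 1) a u = t (k + 1) 0 + (\<Sum>j\<le>k. t (k + 1) (Suc j))"
    unfolding dickson_def t_def Suc_eq_plus1[symmetric] by (rule sum.atMost_Suc_shift)
  moreover have "t (k + 2) 0 = u * t (k + 1) 0" by (simp add: t_def dickson_coeff_0)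
  ultimately show ?thesis by (simp add: algebra_simps)
qed

lemma dickson_eval:
  assumes "x \<noteq> 0" "1 \<le> M"
  shows "dickson M a (x + a / x) = x^M + (a / x)^M"
  using assms(2)
proof (induction M rule: less_induct)
  case (less M)
  consider "M = 1" | "M = 2" | "3 \<le> M" using less.prems by linarith
  then show ?case
  proof cases
    case 1
    then show ?thesis by (simp add: dickson_def dickson_coeff_def)
  next
    case 2
    have "dickson 2 a (x + a / x) = (x + a / x)^2 - 2 * a"
      by (simp add: dickson_def dickson_coeff_def numeral_2_eq_2)
    with 2 assms(1) show ?thesis by (simp add: power2_sum)
  next
    case 3
    define k where "k = M - 2"
    have k: "M = k + 2" "1 \<le> k" using 3 by (simp_all add: k_def)
    define y where "y = a / x"
    have "x * y = a" using assms(1) by (simp add: y_def)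
    have "dickson M a (x + y) = (x + y) * dickson (k + 1) a (x + y) - x * y * dickson k a (x + y)"
      unfolding k(1) dickson_rec[OF k(2)] \<open>x * y = a\<close> ..
    also have "\<dots> = (x + y) * (x^(k + 1) + y^(k + 1)) - x * y * (x^k + y^k)"
      using less.IH[of "k + 1"] less.IH[of k] k by (simp add: y_def)
    also have "\<dots> = x^M + y^M" using k(1) by (simp add: algebra_simps)
    finally show ?thesis by (simp add: y_def)
  qed
qed

lemma poly_fpoly:
  assumes "odd n"
  shows "poly (of_rat_poly (fpoly n d R)) u
    = dickson n (of_rat (d^2 - R)) u - 2 * of_rat d * of_rat (d^2 - R) ^ ((n - 1) div 2)"
proof -
  define D where "D = d^2 - R"
  have half: "(n - Suc 0) div 2 = n div 2" using assms by (auto elim: oddE)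
  have "poly (of_rat_poly (fpoly n d R)) u
      = (\<Sum>j\<le>n div 2. of_rat ((-1)^j * (of_nat n / of_nat (n - j)) * of_nat ((n - j) choose j) * D^j)
          * u^(n - 2*j)) - of_rat (2 * d * D^((n - 1) div 2))"
    unfolding fpoly_def Let_def D_def[symmetric] of_rat_poly_diff of_rat_poly_sum poly_diff poly_sum
    by (simp add: map_poly_monom map_poly_pCons poly_monom atLeast0AtMost half del: of_rat_mult)
  also have "\<dots> = dickson n (of_rat D) u - 2 * of_rat d * of_rat D ^ ((n - 1) div 2)"
    unfolding dickson_altdef dickson_coeff_def
    by (simp add: of_rat_mult of_rat_divide of_rat_power of_rat_minus of_rat_diff mult.assoc)
  finally show ?thesis unfolding D_def .
qed

lemma degree_fpoly:
  assumes "odd n"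
  shows "degree (fpoly n d R) = n"
proof (rule antisym)
  show "degree (fpoly n d R) \<le> n"
    unfolding fpoly_def Let_def
    by (intro degree_diff_le degree_sum_le) (auto intro: order.trans[OF degree_monom_le])
  have "n \<noteq> 0" using odd_pos[OF assms] by simp
  have "coeff (monom ((-1)^j * (of_nat n / of_nat (n - j)) * of_nat ((n - j) choose j) * (d^2 - R)^j)
      (n - 2*j)) n = (if j = 0 then 1 else 0)" for j
    using \<open>n \<noteq> 0\<close> by (auto simp: coeff_monom)
  then have "coeff (fpoly n d R) n = 1"
    unfolding fpoly_def Let_def coeff_diff coeff_sum
    by (simp only:) (use \<open>n \<noteq> 0\<close> in \<open>simp add: coeff_pCons split: nat.split\<close>)
  then show "n \<le> degree (fpoly n d R)" by (intro le_degree) simp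
qed

section \<open>The substitution z \<mapsto> z + a/z\<close>

lemma poly_eq_if_eq_on_nonzero:
  fixes p q :: "'a::field_char_0 poly"
  assumes "\<And>z. z \<noteq> 0 \<Longrightarrow> poly p z = poly q z"
  shows "p = q"
proof (rule ccontr)
  assume "p \<noteq> q"
  then have "finite {z. poly (p - q) z = 0}" by (intro poly_roots_finite) simp
  moreover have "- {0} \<subseteq> {z. poly (p - q) z = 0}" using assms by auto
  moreover have "infinite (- {0 :: 'a})" by (simp add: infinite_UNIV_char_0)
  ultimately show False using finite_subset by blast
qed

definition joukowski_poly :: "'a::comm_ring_1 \<Rightarrow> nat \<Rightarrow> 'a poly \<Rightarrow> 'a poly" where
  "joukowski_poly a e p = (\<Sum>i\<le>e. smult (coeff p i) ([:a, 0, 1:]^i * monom 1 (e - i)))"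

lemma poly_joukowski_poly:
  fixes z :: "'a::field"
  assumes "z \<noteq> 0" "degree p \<le> e"
  shows "poly (joukowski_poly a e p) z = z^e * poly p (z + a / z)"
proof -
  have "poly (joukowski_poly a e p) z = (\<Sum>i\<le>e. z^e * (coeff p i * (z + a / z)^i))"
    unfolding joukowski_poly_def poly_sum
  proof (rule sum.cong[OF refl])
    fix i assume "i \<in> {..e}"
    then have "z^e = z^(e - i) * z^i" by (simp flip: power_add)
    moreover have "z + a / z = (a + z * z) / z" using assms(1) by (simp add: field_simps)
    ultimately show "poly (smult (coeff p i) ([:a, 0, 1:]^i * monom 1 (e - i))) z
        = z^e * (coeff p i * (z + a / z)^i)"
      using assms(1) by (simp add: poly_monom power_divide field_simps)
  qed
  also have "\<dots> = z^e * (\<Sum>i\<le>degree p. coeff p i * (z + a / z)^i)"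
    unfolding sum_distrib_left using assms(2)
    by (intro sum.mono_neutral_right) (auto simp: coeff_eq_0)
  also have "\<dots> = z^e * poly p (z + a / z)" by (simp add: poly_altdef)
  finally show ?thesis .
qed

lemma degree_joukowski_term:
  "degree ([:a, 0, 1:]^i * monom 1 (e - i) :: 'a::idom poly) = 2 * i + (e - i)"
  and lead_coeff_joukowski_term:
  "lead_coeff ([:a, 0, 1:]^i * monom 1 (e - i) :: 'a::idom poly) = 1"
  by (simp add: degree_mult_eq degree_power_eq degree_monom_eq)
    (simp only: lead_coeff_mult lead_coeff_power lead_coeff_monom, simp)

lemma degree_joukowski_poly_le: "degree (joukowski_poly a e (p :: 'a::idom poly)) \<le> 2 * e"
  unfolding joukowski_poly_def
  by (intro degree_sum_le order.trans[OF degree_smult_le]) (auto simp: degree_joukowski_term)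

lemma coeff_joukowski_poly_top: "coeff (joukowski_poly a e (p :: 'a::idom poly)) (2 * e) = coeff p e"
proof -
  have "coeff (joukowski_poly a e p) (2 * e) = (\<Sum>i\<le>e. if i = e then coeff p i else 0)"
    unfolding joukowski_poly_def coeff_sum
  proof (rule sum.cong[OF refl])
    fix i assume "i \<in> {..e}"
    moreover have "coeff ([:a, 0, 1:]^e * monom 1 (e - e)) (2 * e) = (1 :: 'a)"
      using lead_coeff_joukowski_term[of a e e] degree_joukowski_term[of a e e] by simp
    ultimately show "coeff (smult (coeff p i) ([:a, 0, 1:]^i * monom 1 (e - i))) (2 * e)
        = (if i = e then coeff p i else 0)"
      using degree_joukowski_term[of a i e] by (auto simp: coeff_eq_0)
  qed
  then show ?thesis by simp
qed

lemma degree_joukowski_poly: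
  "degree (joukowski_poly a (degree p) (p :: 'a::idom poly)) = 2 * degree p"
proof (cases "p = 0")
  case False
  then have "2 * degree p \<le> degree (joukowski_poly a (degree p) p)"
    by (intro le_degree) (simp add: coeff_joukowski_poly_top)
  then show ?thesis using degree_joukowski_poly_le[of a "degree p" p] by simp
qed (simp add: joukowski_poly_def)

lemma (in subfield) poly_over_joukowski_poly [intro]:
  "a \<in> K \<Longrightarrow> poly_over K p \<Longrightarrow> poly_over K (joukowski_poly a e p)"
  unfolding joukowski_poly_def by (intro poly_over_sum poly_over_smult poly_over_mult
      poly_over_power poly_over_pCons poly_over_monom) (auto simp: poly_over_def)

lemma poly_reflect_poly_pcompose:
  fixes x :: "'a::field"
  assumes "x \<noteq> 0" "a \<noteq> 0"
  shows "poly (reflect_poly (p \<circ>\<^sub>p [:0, a:])) x = x ^ degree p * poly p (a / x)"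
  using assms by (simp add: poly_reflect_poly_nz degree_pcompose poly_pcompose divide_inverse mult.commute)

lemma (in subfield) poly_over_reflect_poly_pcompose [intro]:
  "a \<in> K \<Longrightarrow> poly_over K p \<Longrightarrow> poly_over K (reflect_poly (p \<circ>\<^sub>p [:0, a:]))"
  unfolding poly_over_def coeff_reflect_poly
  by (auto intro!: coeff_pcompose_semiring_closed[of K] simp: coeff_pCons split: nat.split)

(* Reduction of z^i modulo z^2 = w z - a, where w = z + a/z. *)
fun joukowski_parts :: "'a::comm_ring_1 \<Rightarrow> nat \<Rightarrow> 'a poly \<times> 'a poly" where
  "joukowski_parts a 0 = (1, 0)"
| "joukowski_parts a (Suc i) =
    (smult (- a) (snd (joukowski_parts a i)), fst (joukowski_parts a i) + [:0, 1:] * snd (joukowski_parts a i))"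

lemma poly_joukowski_parts:
  fixes z :: "'a::field"
  assumes "z \<noteq> 0"
  shows "z^i = poly (fst (joukowski_parts a i)) (z + a / z) + poly (snd (joukowski_parts a i)) (z + a / z) * z"
proof (induction i)
  case (Suc i)
  define w where "w = z + a / z"
  obtain A B where AB: "joukowski_parts a i = (A, B)" by fastforce
  have "z ^ Suc i = poly A w * z + poly B w * (z * z)"
    using Suc by (simp add: AB w_def algebra_simps)
  also have "z * z = w * z - a" using assms by (simp add: w_def field_simps)
  finally show ?case by (simp add: AB w_def algebra_simps)
qed simp

lemma (in subfield) poly_over_joukowski_parts:
  "a \<in> K \<Longrightarrow> poly_over K (fst (joukowski_parts a i)) \<and> poly_over K (snd (joukowski_parts a i))"
  by (induction i) (auto intro!: poly_over_add poly_over_mult poly_over_smult)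

lemma (in subfield) joukowski_decomposition:
  assumes "a \<in> K" "poly_over K q"
  obtains U V where "poly_over K U" "poly_over K V"
    "\<And>z. z \<noteq> 0 \<Longrightarrow> poly q z = poly U (z + a / z) + poly V (z + a / z) * z"
proof
  define U where "U = (\<Sum>i\<le>degree q. smult (coeff q i) (fst (joukowski_parts a i)))"
  define V where "V = (\<Sum>i\<le>degree q. smult (coeff q i) (snd (joukowski_parts a i)))"
  show "poly_over K U" "poly_over K V"
    using assms poly_over_joukowski_parts unfolding U_def V_def poly_over_def[of K q] by blast+
  fix z :: 'a assume "z \<noteq> 0"
  have "poly q z = (\<Sum>i\<le>degree q. coeff q i * z^i)" by (rule poly_altdef)
  also have "\<dots> = poly U (z + a / z) + poly V (z + a / z) * z"
    unfolding U_def V_def poly_joukowski_parts[OF \<open>z \<noteq> 0\<close>, of _ a]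
    by (simp add: poly_sum sum.distrib sum_distrib_left sum_distrib_right algebra_simps)
  finally show "poly q z = poly U (z + a / z) + poly V (z + a / z) * z" .
qed

(* H is the norm of q from K(z) down to K(z + a/z); the conjugation of this extension is z \<mapsto> a/z. *)
lemma (in subfield) joukowski_norm_exists:
  assumes a: "a \<in> K" "a \<noteq> 0" and q: "poly_over K q" "q \<noteq> 0"
  obtains H where "poly_over K H" "H \<noteq> 0" "degree H \<le> degree q"
    "\<And>z. z \<noteq> 0 \<Longrightarrow> poly H (z + a / z) = poly q z * poly q (a / z)"
proof -
  obtain U V where UV: "poly_over K U" "poly_over K V"
    and q_eq: "\<And>z. z \<noteq> 0 \<Longrightarrow> poly q z = poly U (z + a / z) + poly V (z + a / z) * z"
    using joukowski_decomposition[OF a(1) q(1)] by blast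
  define H where "H = U * U + [:0, 1:] * U * V + smult a (V * V)"
  have "poly_over K H" unfolding H_def using a(1) UV by (intro poly_over_add) auto
  have H_eq: "poly H (z + a / z) = poly q z * poly q (a / z)" if "z \<noteq> 0" for z
  proof -
    have "a / z + a / (a / z) = z + a / z" using that a(2) by simp
    then have "poly q (a / z) = poly U (z + a / z) + poly V (z + a / z) * (a / z)"
      using q_eq[of "a / z"] that a(2) by (simp add: add.commute)
    moreover have "z * (a / z) = a" using that by simp
    ultimately show ?thesis
      unfolding H_def q_eq[OF that] using that by (simp add: algebra_simps)
  qed
  define Q where "Q = reflect_poly (q \<circ>\<^sub>p [:0, a:])"
  have Q_eq: "poly Q z = z ^ degree q * poly q (a / z)" if "z \<noteq> 0" for z
    unfolding Q_def using that a(2) by (rule poly_reflect_poly_pcompose)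
  have "Q \<noteq> 0" using q(2) a(2) by (simp add: Q_def pcompose_eq_0_iff)
  have "H \<noteq> 0"
  proof
    assume "H = 0"
    have "q * Q = 0"
      by (rule poly_eq_if_eq_on_nonzero) (use H_eq Q_eq \<open>H = 0\<close> in auto)
    with q(2) \<open>Q \<noteq> 0\<close> show False by simp
  qed
  have "degree H \<le> degree q"
  proof (rule ccontr)
    assume "\<not> degree H \<le> degree q"
    define e where "e = degree H"
    have "joukowski_poly a e H = monom 1 (e - degree q) * q * Q"
    proof (rule poly_eq_if_eq_on_nonzero)
      fix z :: 'a assume "z \<noteq> 0"
      have "z ^ e = z ^ (e - degree q) * z ^ degree q"
        using \<open>\<not> degree H \<le> degree q\<close> by (simp add: e_def flip: power_add)
      then show "poly (joukowski_poly a e H) z = poly (monom 1 (e - degree q) * q * Q) z"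
        using \<open>z \<noteq> 0\<close> by (simp add: poly_joukowski_poly e_def H_eq Q_eq poly_monom)
    qed
    then have "2 * e \<le> (e - degree q) + degree q + degree q"
      using degree_joukowski_poly[of a H] degree_reflect_poly_le[of "q \<circ>\<^sub>p [:0, a:]"]
        degree_mult_le[of "monom 1 (e - degree q) * q" Q] degree_mult_le[of "monom 1 (e - degree q)" q] a(2)
      by (simp add: e_def Q_def degree_pcompose degree_monom_eq)
    then show False using \<open>\<not> degree H \<le> degree q\<close> unfolding e_def by linarith
  qed
  show ?thesis using that \<open>poly_over K H\<close> \<open>H \<noteq> 0\<close> \<open>degree H \<le> degree q\<close> H_eq by blast
qed

lemma (in subfield) min_poly_degree_ge_joukowski_iff:
  assumes a: "a \<in> K" "a \<noteq> 0" and "x \<noteq> 0"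
    and p: "poly_over K p" "poly p x = 0" "poly p (a / x) \<noteq> 0"
  shows "min_poly_degree_ge K (x + a / x) (degree p) \<longleftrightarrow> min_poly_degree_ge K x (degree p)"
proof
  assume min: "min_poly_degree_ge K (x + a / x) (degree p)"
  show "min_poly_degree_ge K x (degree p)"
    unfolding min_poly_degree_ge_def
  proof (intro allI impI)
    fix q assume q: "poly_over K q" "q \<noteq> 0" "poly q x = 0"
    obtain H where "poly_over K H" "H \<noteq> 0" "degree H \<le> degree q"
      and "poly H (x + a / x) = poly q x * poly q (a / x)"
      using joukowski_norm_exists[OF a q(1,2)] \<open>x \<noteq> 0\<close> by metis
    with min q(3) show "degree p \<le> degree q"
      unfolding min_poly_degree_ge_def by fastforce
  qed
next
  assume min: "min_poly_degree_ge K x (degree p)"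
  have "a / x \<noteq> 0" "a / x + a / (a / x) = x + a / x" using a(2) \<open>x \<noteq> 0\<close> by auto
  have "p \<noteq> 0" using p(3) by auto
  show "min_poly_degree_ge K (x + a / x) (degree p)"
    unfolding min_poly_degree_ge_def
  proof (intro allI impI, rule ccontr)
    fix q assume q: "poly_over K q" "q \<noteq> 0" "poly q (x + a / x) = 0"
      and "\<not> degree p \<le> degree q"
    (* S vanishes at x and at a/x; dividing by p keeps a root at a/x, and reflecting the
       cofactor gives a polynomial of degree < degree p vanishing at x. *)
    define S where "S = joukowski_poly a (degree q) q"
    have "coeff S (2 * degree q) \<noteq> 0"
      using coeff_joukowski_poly_top[of a "degree q" q] q(2) by (simp add: S_def)
    then have "S \<noteq> 0" by auto
    have "degree S = 2 * degree q" by (simp add: S_def degree_joukowski_poly)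
    have "poly S x = 0" "poly S (a / x) = 0"
      using poly_joukowski_poly[of x q "degree q" a] poly_joukowski_poly[of "a / x" q "degree q" a]
        \<open>x \<noteq> 0\<close> \<open>a / x \<noteq> 0\<close> q(3) \<open>a / x + a / (a / x) = x + a / x\<close>
      by (simp_all add: S_def add.commute)
    then obtain T where S_eq: "S = p * T"
      using min_poly_dvd[OF p(1) \<open>p \<noteq> 0\<close> p(2) min, of S] a(1) q(1)
      by (auto simp: S_def poly_over_joukowski_poly)
    have "poly_over K S" using a(1) q(1) by (simp add: S_def poly_over_joukowski_poly)
    moreover have "T = S div p" using \<open>p \<noteq> 0\<close> by (simp add: S_eq)
    ultimately have "poly_over K T" using poly_over_div_mod(1) p(1) by simp
    have "T \<noteq> 0" "poly T (a / x) = 0"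
      using \<open>S \<noteq> 0\<close> \<open>poly S (a / x) = 0\<close> p(3) by (auto simp: S_eq)
    have "degree T < degree p"
      using \<open>degree S = 2 * degree q\<close> \<open>\<not> degree p \<le> degree q\<close> \<open>p \<noteq> 0\<close> \<open>T \<noteq> 0\<close>
      by (simp add: S_eq degree_mult_eq)
    define T' where "T' = reflect_poly (T \<circ>\<^sub>p [:0, a:])"
    have "poly_over K T'" "T' \<noteq> 0" "poly T' x = 0" "degree T' < degree p"
      using \<open>poly_over K T\<close> a \<open>T \<noteq> 0\<close> \<open>poly T (a / x) = 0\<close> \<open>x \<noteq> 0\<close> \<open>degree T < degree p\<close>
        degree_reflect_poly_le[of "T \<circ>\<^sub>p [:0, a:]"]
      by (auto simp: T'_def pcompose_eq_0_iff poly_reflect_poly_pcompose degree_pcompose)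
    with min show False unfolding min_poly_degree_ge_def by fastforce
  qed
qed

section \<open>The quadratic field \<rat>(\<surd>R)\<close>

lemma of_rat_add_mult_eq_0_iff:
  fixes t :: "'a::field_char_0"
  assumes "t \<notin> \<rat>"
  shows "of_rat a + of_rat b * t = 0 \<longleftrightarrow> a = 0 \<and> b = 0"
proof
  assume eq: "of_rat a + of_rat b * t = 0"
  show "a = 0 \<and> b = 0"
  proof (cases "b = 0")
    case False
    from eq have "of_rat b * t = - of_rat a" by (simp add: eq_neg_iff_add_eq_0 add.commute)
    with False have "t = of_rat (- a / b)" by (simp add: of_rat_divide of_rat_minus field_simps)
    with assms show ?thesis by simp
  qed (use eq in simp)
qed simp

lemma coeff_rat_poly_combination:
  "coeff (of_rat_poly a + smult t (of_rat_poly b)) i = of_rat (coeff a i) + of_rat (coeff b i) * t"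
  by (simp add: mult.commute)

lemma degree_rat_poly_combination:
  fixes t :: "'a::field_char_0"
  assumes "t \<notin> \<rat>"
  shows "degree (of_rat_poly a + smult t (of_rat_poly b)) = max (degree a) (degree b)"
proof (rule antisym)
  show "degree (of_rat_poly a + smult t (of_rat_poly b)) \<le> max (degree a) (degree b)"
    using degree_add_le[of "of_rat_poly a" "max (degree a) (degree b)" "smult t (of_rat_poly b)"]
      degree_smult_le[of t "of_rat_poly b"] by simp
  show "max (degree a) (degree b) \<le> degree (of_rat_poly a + smult t (of_rat_poly b))"
  proof (cases "a = 0 \<and> b = 0")
    case False
    define m where "m = max (degree a) (degree b)"
    consider "m = degree a" "a \<noteq> 0" | "m = degree b" "b \<noteq> 0"
      using False by (cases "degree a \<le> degree b"; cases "a = 0"; cases "b = 0") (auto simp: m_def)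
    then have "coeff a m \<noteq> 0 \<or> coeff b m \<noteq> 0" by cases auto
    then show ?thesis
      using of_rat_add_mult_eq_0_iff[OF assms] unfolding m_def[symmetric]
      by (intro le_degree) (simp only: coeff_rat_poly_combination, simp)
  qed simp
qed

lemma rat_poly_combination_mult:
  fixes t :: "'a::field_char_0"
  assumes "t * t = of_rat r"
  shows "(of_rat_poly a + smult t (of_rat_poly b)) * (of_rat_poly c + smult t (of_rat_poly e))
    = of_rat_poly (a * c + smult r (b * e)) + smult t (of_rat_poly (a * e + b * c))"
proof -
  have "(of_rat_poly a + smult t (of_rat_poly b)) * (of_rat_poly c + smult t (of_rat_poly e))
    = of_rat_poly a * of_rat_poly c + smult (t * t) (of_rat_poly b * of_rat_poly e)
      + smult t (of_rat_poly a * of_rat_poly e + of_rat_poly b * of_rat_poly c)"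
    by (simp add: algebra_simps smult_add_right)
  then show ?thesis
    by (simp add: assms of_rat_poly_add of_rat_poly_mult of_rat_poly_smult smult_add_right)
qed

locale quadratic_field =
  fixes R :: rat
  assumes not_square: "\<not> (\<exists>q::rat. q^2 = R)"
begin

definition sqrt_R :: complex where "sqrt_R = csqrt (of_rat R)"

lemma sqrt_R_mult_self [simp]: "sqrt_R * sqrt_R = of_rat R"
  by (simp add: sqrt_R_def flip: power2_eq_square)

lemma sqrt_R_not_Rats: "sqrt_R \<notin> \<rat>" "- sqrt_R \<notin> \<rat>"
proof -
  show "sqrt_R \<notin> \<rat>"
  proof
    assume "sqrt_R \<in> \<rat>"
    then obtain q where "sqrt_R = of_rat q" by (auto elim: Rats_cases)
    then have "(of_rat (q^2) :: complex) = of_rat R"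
      by (metis sqrt_R_mult_self of_rat_mult power2_eq_square)
    with not_square show False by simp
  qed
  then show "- sqrt_R \<notin> \<rat>" using Rats_minus_iff by blast
qed

lemma K0_eq: "K0 R = {of_rat a + of_rat b * sqrt_R | a b. True}"
  by (simp add: K0_def sqrt_R_def)

lemma sqrt_R_in_K0: "sqrt_R \<in> K0 R"
  unfolding K0_eq by (intro CollectI exI[of _ 0] exI[of _ 1]) simp

lemma Rats_subset_K0: "\<rat> \<subseteq> K0 R"
proof
  fix x :: complex assume "x \<in> \<rat>"
  then obtain q where "x = of_rat q + of_rat 0 * sqrt_R" by (auto elim: Rats_cases)
  then show "x \<in> K0 R" unfolding K0_eq by blast
qed

lemma K0_mult:
  "(of_rat a + of_rat b * sqrt_R) * (of_rat c + of_rat e * sqrt_R)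
    = of_rat (a * c + b * e * R) + of_rat (a * e + b * c) * sqrt_R"
proof -
  have "(of_rat a + of_rat b * sqrt_R) * (of_rat c + of_rat e * sqrt_R)
    = of_rat a * of_rat c + of_rat b * of_rat e * (sqrt_R * sqrt_R)
      + (of_rat a * of_rat e + of_rat b * of_rat c) * sqrt_R"
    by (simp add: algebra_simps)
  then show ?thesis by (simp add: of_rat_add of_rat_mult)
qed

lemma subfield_K0: "subfield (K0 R)"
proof
  show "0 \<in> K0 R" "1 \<in> K0 R" using Rats_subset_K0 by auto
  fix x y assume "x \<in> K0 R" "y \<in> K0 R"
  then obtain a b c e where x: "x = of_rat a + of_rat b * sqrt_R" and y: "y = of_rat c + of_rat e * sqrt_R"
    unfolding K0_eq by blast
  have "x + y = of_rat (a + c) + of_rat (b + e) * sqrt_R" by (simp add: x y of_rat_add algebra_simps)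
  then show "x + y \<in> K0 R" unfolding K0_eq by blast
  show "x * y \<in> K0 R" unfolding x y K0_mult K0_eq by blast
  have "- x = of_rat (- a) + of_rat (- b) * sqrt_R" by (simp add: x of_rat_minus)
  then show "- x \<in> K0 R" unfolding K0_eq by blast
  show "inverse x \<in> K0 R"
  proof (cases "a = 0 \<and> b = 0")
    case False
    define N where "N = a^2 - b^2 * R"
    have "N \<noteq> 0"
    proof
      assume "N = 0"
      then have "a^2 = b^2 * R" by (simp add: N_def)
      with False not_square have "b = 0" by (metis power_divide nonzero_mult_div_cancel_left power_eq_0_iff)
      with \<open>a^2 = b^2 * R\<close> False show False by simp
    qed
    have "x * (of_rat (a / N) + of_rat (- b / N) * sqrt_R) = 1"
      unfolding x K0_mult using \<open>N \<noteq> 0\<close>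
      by (simp add: field_simps, simp add: N_def power2_eq_square algebra_simps)
    then have "inverse x = of_rat (a / N) + of_rat (- b / N) * sqrt_R" by (rule inverse_unique)
    then show ?thesis unfolding K0_eq by blast
  qed (use Rats_subset_K0 in \<open>auto simp: x\<close>)
qed

lemma poly_over_K0_iff:
  "poly_over (K0 R) p \<longleftrightarrow> (\<exists>a b. p = of_rat_poly a + smult sqrt_R (of_rat_poly b))"
proof
  assume "poly_over (K0 R) p"
  then show "\<exists>a b. p = of_rat_poly a + smult sqrt_R (of_rat_poly b)"
  proof (induction p)
    case (pCons c p)
    then have "c \<in> K0 R" "poly_over (K0 R) p"
      unfolding poly_over_def by (metis coeff_pCons_0, metis coeff_pCons_Suc)
    then obtain a b u v where "p = of_rat_poly a + smult sqrt_R (of_rat_poly b)"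
        "c = of_rat u + of_rat v * sqrt_R"
      using pCons.IH unfolding K0_eq by blast
    then have "pCons c p = of_rat_poly (pCons u a) + smult sqrt_R (of_rat_poly (pCons v b))"
      by (simp add: map_poly_pCons algebra_simps)
    then show ?case by blast
  qed (auto intro: exI[of _ 0])
next
  assume "\<exists>a b. p = of_rat_poly a + smult sqrt_R (of_rat_poly b)"
  then show "poly_over (K0 R) p"
    using subfield.poly_over_add[OF subfield_K0] subfield.poly_over_smult[OF subfield_K0]
      subfield.poly_over_of_rat_poly[OF subfield_K0] sqrt_R_in_K0 by metis
qed

lemma rat_poly_combination_eq_iff:
  "of_rat_poly a + smult sqrt_R (of_rat_poly b) = of_rat_poly a' + smult sqrt_R (of_rat_poly b')
    \<longleftrightarrow> a = a' \<and> b = b'"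
proof -
  have "of_rat_poly a + smult sqrt_R (of_rat_poly b) - (of_rat_poly a' + smult sqrt_R (of_rat_poly b'))
    = of_rat_poly (a - a') + smult sqrt_R (of_rat_poly (b - b'))"
    by (simp add: of_rat_poly_diff smult_diff_right)
  then show ?thesis
    using of_rat_add_mult_eq_0_iff[OF sqrt_R_not_Rats(1)]
    by (auto simp: poly_eq_iff coeff_rat_poly_combination simp del: coeff_add coeff_smult coeff_of_rat_poly)
qed

(* Conjugation \<surd>R \<mapsto> -\<surd>R of polynomials over K0; a junk value for other polynomials. *)
definition conj_poly :: "complex poly \<Rightarrow> complex poly" where
  "conj_poly p = (THE q. \<exists>a b. p = of_rat_poly a + smult sqrt_R (of_rat_poly b)
                             \<and> q = of_rat_poly a - smult sqrt_R (of_rat_poly b))"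

lemma conj_poly_eq [simp]:
  "conj_poly (of_rat_poly a + smult sqrt_R (of_rat_poly b)) = of_rat_poly a - smult sqrt_R (of_rat_poly b)"
  unfolding conj_poly_def by (rule the_equality) (auto simp: rat_poly_combination_eq_iff)

lemma conj_poly_of_rat_poly [simp]: "conj_poly (of_rat_poly a) = of_rat_poly a"
  using conj_poly_eq[of a 0] by simp

lemma diff_smult_sqrt_R:
  "of_rat_poly a - smult sqrt_R (of_rat_poly b) = of_rat_poly a + smult sqrt_R (of_rat_poly (- b))"
  by (simp add: of_rat_poly_uminus)

lemma poly_over_conj_poly: "poly_over (K0 R) p \<Longrightarrow> poly_over (K0 R) (conj_poly p)"
  unfolding poly_over_K0_iff by (metis conj_poly_eq diff_smult_sqrt_R)

lemma conj_conj_poly: "poly_over (K0 R) p \<Longrightarrow> conj_poly (conj_poly p) = p"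
  unfolding poly_over_K0_iff by (auto simp only: conj_poly_eq diff_smult_sqrt_R minus_minus)

lemma conj_poly_mult:
  assumes "poly_over (K0 R) p" "poly_over (K0 R) q"
  shows "conj_poly (p * q) = conj_poly p * conj_poly q"
proof -
  obtain a b c e where "p = of_rat_poly a + smult sqrt_R (of_rat_poly b)"
    "q = of_rat_poly c + smult sqrt_R (of_rat_poly e)"
    using assms unfolding poly_over_K0_iff by blast
  moreover have "- sqrt_R * - sqrt_R = of_rat R" by simp
  ultimately show ?thesis
    using rat_poly_combination_mult[of sqrt_R R] rat_poly_combination_mult[of "- sqrt_R" R]
    by (simp add: smult_minus_left)
qed

lemma degree_conj_poly: "poly_over (K0 R) p \<Longrightarrow> degree (conj_poly p) = degree p"
  unfolding poly_over_K0_iff using degree_rat_poly_combination[OF sqrt_R_not_Rats(1)]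
    degree_rat_poly_combination[OF sqrt_R_not_Rats(2)]
  by (auto simp: smult_minus_left)

lemma mult_conj_poly:
  "(of_rat_poly a + smult sqrt_R (of_rat_poly b)) * conj_poly (of_rat_poly a + smult sqrt_R (of_rat_poly b))
    = of_rat_poly (a * a - smult R (b * b))"
proof -
  have "(of_rat_poly a + smult sqrt_R (of_rat_poly b)) * (of_rat_poly a - smult sqrt_R (of_rat_poly b))
    = of_rat_poly a * of_rat_poly a - smult (sqrt_R * sqrt_R) (of_rat_poly b * of_rat_poly b)"
    by (simp add: algebra_simps)
  then show ?thesis by (simp add: of_rat_poly_diff of_rat_poly_mult of_rat_poly_smult)
qed

lemma irreducible_over_conj_poly:
  assumes irr: "irreducible_over (K0 R) g"
  shows "irreducible_over (K0 R) (conj_poly g)"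
proof -
  have g: "poly_over (K0 R) g" "0 < degree g" using irr by (simp_all add: irreducible_over_iff)
  show ?thesis
    unfolding irreducible_over_iff
  proof (intro conjI allI impI)
    show "poly_over (K0 R) (conj_poly g)" "0 < degree (conj_poly g)"
      using g by (simp_all add: poly_over_conj_poly degree_conj_poly)
    fix q r assume qr: "poly_over (K0 R) q" "poly_over (K0 R) r" "conj_poly g = q * r"
    then have "g = conj_poly q * conj_poly r"
      using conj_conj_poly[OF g(1)] conj_poly_mult[OF qr(1,2)] by simp
    then have "degree (conj_poly q) = 0 \<or> degree (conj_poly r) = 0"
      by (intro irreducible_overD[OF irr] poly_over_conj_poly qr(1,2))
    then show "degree q = 0 \<or> degree r = 0" using qr(1,2) by (simp add: degree_conj_poly)
  qed
qed

lemma common_root_conj_poly: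
  assumes "poly (of_rat_poly a + smult sqrt_R (of_rat_poly b)) y = 0"
    and "poly (conj_poly (of_rat_poly a + smult sqrt_R (of_rat_poly b))) y = 0"
  shows "poly (of_rat_poly a) y = 0" "poly (of_rat_poly b) y = 0"
proof -
  have "poly (of_rat_poly a) y + sqrt_R * poly (of_rat_poly b) y = 0"
    "poly (of_rat_poly a) y - sqrt_R * poly (of_rat_poly b) y = 0"
    using assms by simp_all
  then have "poly (of_rat_poly a) y = 0" "sqrt_R * poly (of_rat_poly b) y = 0"
    by (simp_all add: algebra_simps)
  moreover have "sqrt_R \<noteq> 0" using sqrt_R_not_Rats(1) by auto
  ultimately show "poly (of_rat_poly a) y = 0" "poly (of_rat_poly b) y = 0" by simp_all
qed

lemma mult_conj_poly_dvd:
  assumes irr: "irreducible_over (K0 R) g" and y: "poly g y = 0" "poly (conj_poly g) y \<noteq> 0"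
    and dvd: "g dvd of_rat_poly f"
  shows "g * conj_poly g dvd of_rat_poly f"
proof -
  interpret K0: subfield "K0 R" by (rule subfield_K0)
  have g: "poly_over (K0 R) g" "0 < degree g" using irr by (simp_all add: irreducible_over_iff)
  then have "g \<noteq> 0" by auto
  obtain k where f_eq: "of_rat_poly f = g * k" using dvd by (rule dvdE)
  have k: "poly_over (K0 R) k"
    using K0.poly_over_div_mod(1)[OF K0.poly_over_of_rat_poly g(1), of f] f_eq \<open>g \<noteq> 0\<close> by simp
  have f_eq': "of_rat_poly f = conj_poly g * conj_poly k"
    using arg_cong[OF f_eq, of conj_poly] conj_poly_mult[OF g(1) k] by simp
  have cg: "poly_over (K0 R) (conj_poly g)" "0 < degree (conj_poly g)"
    using g by (simp_all add: poly_over_conj_poly degree_conj_poly)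
  then obtain y' where y': "poly (conj_poly g) y' = 0" by (metis root_exists_if_degree_pos)
  have "conj_poly g \<noteq> 0" using cg(2) by auto
  have min: "min_poly_degree_ge (K0 R) y' (degree (conj_poly g))"
    using irreducible_over_iff_min_poly_degree_ge[OF subfield_K0 cg y'] irreducible_over_conj_poly[OF irr]
    by simp
  have "poly g y' \<noteq> 0"
  proof
    assume "poly g y' = 0"
    then obtain c where g_eq: "g = conj_poly g * c"
      using K0.min_poly_dvd[OF cg(1) \<open>conj_poly g \<noteq> 0\<close> y' min g(1)] by (auto elim: dvdE)
    then have "c \<noteq> 0" using \<open>g \<noteq> 0\<close> by auto
    have "degree g = degree (conj_poly g) + degree c"
      using arg_cong[OF g_eq, of degree] degree_mult_eq[OF \<open>conj_poly g \<noteq> 0\<close> \<open>c \<noteq> 0\<close>] by simp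
    then obtain c0 where "c = [:c0:]" "c0 \<noteq> 0"
      using degree_conj_poly[OF g(1)] \<open>c \<noteq> 0\<close> by (auto elim: degree_eq_zeroE)
    then show False
      using arg_cong[OF g_eq, of "\<lambda>p. poly p y"] y by simp
  qed
  moreover have "poly g y' * poly k y' = 0"
    using y' arg_cong[OF f_eq', of "\<lambda>p. poly p y'"] by (simp add: f_eq)
  ultimately have "poly k y' = 0" by simp
  then have "conj_poly g dvd k"
    by (rule K0.min_poly_dvd[OF cg(1) \<open>conj_poly g \<noteq> 0\<close> y' min k])
  then show ?thesis unfolding f_eq by simp
qed

lemma irreducible_over_K0_if_odd_degree:
  assumes irr: "irreducible_over \<rat> (of_rat_poly f)" and odd: "odd (degree f)"
  shows "irreducible_over (K0 R) (of_rat_poly f)"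
proof -
  interpret K0: subfield "K0 R" by (rule subfield_K0)
  interpret Q: subfield "\<rat> :: complex set" by (rule subfield_Rats)
  have deg: "0 < degree (of_rat_poly f :: complex poly)" using odd by (simp add: odd_pos)
  then obtain y :: complex where y: "poly (of_rat_poly f) y = 0" by (rule root_exists_if_degree_pos)
  have minQ: "min_poly_degree_ge \<rat> y (degree f)"
    using irreducible_over_iff_min_poly_degree_ge[OF subfield_Rats Q.poly_over_of_rat_poly deg y] irr
    by simp
  have "min_poly_degree_ge (K0 R) y (degree f)"
    unfolding min_poly_degree_ge_def
  proof (intro allI impI, rule ccontr)
    fix q assume q: "poly_over (K0 R) q" "q \<noteq> 0" "poly q y = 0" "\<not> degree f \<le> degree q"
    obtain g where g: "poly_over (K0 R) g" "g \<noteq> 0" "poly g y = 0" "min_poly_degree_ge (K0 R) y (degree g)"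
      using K0.min_poly_exists[OF q(1-3)] by blast
    have "degree g \<le> degree q" using g(4) q(1-3) unfolding min_poly_degree_ge_def by blast
    with q(4) have "degree g < degree f" by simp
    have "degree g \<noteq> 0" using g(2,3) by (metis degree_eq_zeroE poly_const_conv pCons_0_0)
    then have "0 < degree g" by simp
    then have irr_g: "irreducible_over (K0 R) g"
      using irreducible_over_iff_min_poly_degree_ge[OF subfield_K0 g(1) _ g(3)] g(4) by simp
    obtain a b where g_eq: "g = of_rat_poly a + smult sqrt_R (of_rat_poly b)"
      using g(1) unfolding poly_over_K0_iff by blast
    show False
    proof (cases "poly (conj_poly g) y = 0")
      case True
      note roots = common_root_conj_poly[OF g(3)[unfolded g_eq] True[unfolded g_eq]]
      have "degree a < degree f" "degree b < degree f"
        using \<open>degree g < degree f\<close> degree_rat_poly_combination[OF sqrt_R_not_Rats(1), of a b]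
        by (simp_all add: g_eq)
      moreover have "a \<noteq> 0 \<or> b \<noteq> 0" using g(2) by (auto simp: g_eq)
      moreover have "degree f \<le> degree c" if "c \<noteq> 0" "poly (of_rat_poly c) y = 0" for c
        using minQ[unfolded min_poly_degree_ge_def, rule_format, OF Q.poly_over_of_rat_poly] that
        by simp
      ultimately show False using roots by fastforce
    next
      case False
      have "g dvd of_rat_poly f"
        using K0.min_poly_dvd[OF g(1,2,3,4) K0.poly_over_of_rat_poly y] .
      then have "g * conj_poly g dvd of_rat_poly f" by (rule mult_conj_poly_dvd[OF irr_g g(3) False])
      moreover have norm: "g * conj_poly g = of_rat_poly (a * a - smult R (b * b))"
        unfolding g_eq by (rule mult_conj_poly)
      ultimately obtain l :: "complex poly" where f_eq: "of_rat_poly f = of_rat_poly (a * a - smult R (b * b)) * l"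
        by (auto elim: dvdE)
      have deg_norm: "degree (of_rat_poly (a * a - smult R (b * b)) :: complex poly) = 2 * degree g"
        using g(2) \<open>0 < degree g\<close> degree_conj_poly[OF g(1)]
        by (subst norm[symmetric], subst degree_mult_eq) auto
      then have "of_rat_poly (a * a - smult R (b * b)) \<noteq> (0 :: complex poly)"
        using \<open>0 < degree g\<close> by auto
      then have "l = of_rat_poly f div of_rat_poly (a * a - smult R (b * b))" by (simp add: f_eq)
      then have "poly_over \<rat> l"
        using Q.poly_over_div_mod(1)[OF Q.poly_over_of_rat_poly Q.poly_over_of_rat_poly] by simp
      then have "degree (of_rat_poly (a * a - smult R (b * b)) :: complex poly) = 0 \<or> degree l = 0"
        by (rule irreducible_overD[OF irr Q.poly_over_of_rat_poly _ f_eq])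
      with deg_norm \<open>0 < degree g\<close> have "degree l = 0" by simp
      moreover have "l \<noteq> 0" using deg f_eq by auto
      ultimately have "degree f = 2 * degree g"
        using arg_cong[OF f_eq, of degree] deg_norm \<open>of_rat_poly (a * a - smult R (b * b)) \<noteq> 0\<close>
        by (simp add: degree_mult_eq)
      with odd show False by simp
    qed
  qed
  then show ?thesis
    using irreducible_over_iff_min_poly_degree_ge[OF subfield_K0 K0.poly_over_of_rat_poly deg y] by simp
qed

lemma irreducible_iff_irreducible_over_K0:
  assumes "odd (degree f)"
  shows "irreducible f \<longleftrightarrow> irreducible_over (K0 R) (of_rat_poly f)"
proof -
  interpret Q: subfield "\<rat> :: complex set" by (rule subfield_Rats)
  show ?thesis
    using irreducible_iff_irreducible_over_Rats[of f] irreducible_over_K0_if_odd_degree[OF _ assms]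
      irreducible_over_subset[OF _ Rats_subset_K0 Q.poly_over_of_rat_poly] by blast
qed

section \<open>The polynomial P and its roots\<close>

lemma Ppoly_eq:
  "Ppoly n d R = monom 1 n - [:of_rat (d^2 - R) ^ ((n - 1) div 2) * (of_rat d + sqrt_R):]"
  by (simp add: Ppoly_def sqrt_R_def of_rat_power)

lemma of_rat_add_sqrt_R_nonzero: "of_rat d + sqrt_R \<noteq> 0" "of_rat d - sqrt_R \<noteq> 0"
  using of_rat_add_mult_eq_0_iff[OF sqrt_R_not_Rats(1), of d 1]
    of_rat_add_mult_eq_0_iff[OF sqrt_R_not_Rats(1), of d "- 1"] by (simp_all add: of_rat_minus)

lemma of_rat_norm_eq: "(of_rat (d^2 - R) :: complex) = (of_rat d + sqrt_R) * (of_rat d - sqrt_R)"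
  by (simp add: of_rat_diff of_rat_mult power2_eq_square algebra_simps)

lemma of_rat_norm_nonzero: "(of_rat (d^2 - R) :: complex) \<noteq> 0"
  using of_rat_add_sqrt_R_nonzero by (simp add: of_rat_norm_eq)

lemma poly_over_Ppoly: "poly_over (K0 R) (Ppoly n d R)"
proof -
  interpret K0: subfield "K0 R" by (rule subfield_K0)
  show ?thesis
    unfolding Ppoly_eq using sqrt_R_in_K0
    by (intro K0.poly_over_diff K0.poly_over_monom K0.poly_over_pCons K0.mult_mem K0.power_mem
        K0.add_mem) auto
qed

lemma degree_Ppoly: "0 < n \<Longrightarrow> degree (Ppoly n d R) = n"
  unfolding Ppoly_eq diff_conv_add_uminus
  by (subst degree_add_eq_left) (simp_all add: degree_monom_eq)

lemma Ppoly_rootD: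
  assumes "odd n" and x: "poly (Ppoly n d R) x = 0"
  defines "D \<equiv> of_rat (d^2 - R) :: complex"
  shows "x \<noteq> 0" "poly (Ppoly n d R) (D / x) \<noteq> 0"
    "poly (of_rat_poly (fpoly n d R)) (x + D / x) = 0"
proof -
  define m where "m = (n - 1) div 2"
  have n: "n = 2 * m + 1" using assms(1) by (simp add: m_def)
  have D_eq: "D = (of_rat d + sqrt_R) * (of_rat d - sqrt_R)" by (simp add: D_def of_rat_norm_eq)
  have "D \<noteq> 0" using of_rat_norm_nonzero by (simp add: D_def)
  have P_eq: "poly (Ppoly n d R) z = z ^ n - D ^ m * (of_rat d + sqrt_R)" for z
    by (simp add: Ppoly_eq poly_monom D_def m_def)
  have xn: "x ^ n = D ^ m * (of_rat d + sqrt_R)" using x by (simp add: P_eq)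
  then show "x \<noteq> 0" using \<open>D \<noteq> 0\<close> of_rat_add_sqrt_R_nonzero n by auto
  have "D ^ n = D ^ m * D ^ m * D" by (simp only: n mult_2 power_add power_one_right)
  also have "\<dots> = D ^ m * D ^ m * ((of_rat d + sqrt_R) * (of_rat d - sqrt_R))"
    by (simp only: D_eq[symmetric])
  also have "\<dots> = x ^ n * (D ^ m * (of_rat d - sqrt_R))" by (simp add: xn mult_ac)
  finally have Dxn: "(D / x) ^ n = D ^ m * (of_rat d - sqrt_R)"
    using \<open>x \<noteq> 0\<close> by (simp add: power_divide)
  have "poly (Ppoly n d R) (D / x) = - 2 * sqrt_R * D ^ m"
    by (simp add: P_eq Dxn algebra_simps)
  then show "poly (Ppoly n d R) (D / x) \<noteq> 0"
    using \<open>D \<noteq> 0\<close> sqrt_R_not_Rats(1) by auto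
  have "poly (of_rat_poly (fpoly n d R)) (x + D / x) = x ^ n + (D / x) ^ n - 2 * of_rat d * D ^ m"
    using poly_fpoly[OF assms(1), of d R "x + D / x"] dickson_eval[OF \<open>x \<noteq> 0\<close>, of n D] odd_pos[OF assms(1)]
    by (simp add: D_def m_def)
  also have "\<dots> = 0" by (simp add: xn Dxn algebra_simps)
  finally show "poly (of_rat_poly (fpoly n d R)) (x + D / x) = 0" .
qed

end

theorem lemma1:
  fixes n :: nat and d R :: rat
  assumes "odd n" and "n \<ge> 3" and "d \<noteq> 0" and "\<not> (\<exists>q::rat. q^2 = R)"
  shows "irreducible (fpoly n d R) \<longleftrightarrow> irreducible_over (K0 R) (Ppoly n d R)"
proof -
  interpret quadratic_field R by unfold_locales (rule assms(4))
  interpret K0: subfield "K0 R" by (rule subfield_K0)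
  define D :: complex where "D = of_rat (d^2 - R)"
  have "0 < n" using odd_pos[OF assms(1)] .
  then obtain x where x: "poly (Ppoly n d R) x = 0"
    using root_exists_if_degree_pos degree_Ppoly by metis
  note x_facts = Ppoly_rootD[OF assms(1) x, folded D_def]
  have "irreducible (fpoly n d R) \<longleftrightarrow> irreducible_over (K0 R) (of_rat_poly (fpoly n d R))"
    using irreducible_iff_irreducible_over_K0 degree_fpoly[OF assms(1)] assms(1) by simp
  also have "\<dots> \<longleftrightarrow> min_poly_degree_ge (K0 R) (x + D / x) n"
    using irreducible_over_iff_min_poly_degree_ge[OF subfield_K0 K0.poly_over_of_rat_poly _ x_facts(3)]
      degree_fpoly[OF assms(1)] \<open>0 < n\<close> by simp
  also have "\<dots> \<longleftrightarrow> min_poly_degree_ge (K0 R) x n"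
    using K0.min_poly_degree_ge_joukowski_iff[OF _ _ x_facts(1) poly_over_Ppoly x x_facts(2)]
      degree_Ppoly[OF \<open>0 < n\<close>] of_rat_norm_nonzero by (simp add: D_def)
  also have "\<dots> \<longleftrightarrow> irreducible_over (K0 R) (Ppoly n d R)"
    using irreducible_over_iff_min_poly_degree_ge[OF subfield_K0 poly_over_Ppoly _ x]
      degree_Ppoly[OF \<open>0 < n\<close>] \<open>0 < n\<close> by simp
  finally show ?thesis .
qed

end
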